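(* Let $k$ be a field of characteristic $p\ge0$ which is a finitely generated field extension of a perfect field, and let $\overline k$ be an algebraic closure of $k$. Let $$\sigma(x)=\sum_{i=d}^{\infty}\alpha_i x^i\in\overline k((x)),$$ with $d\in\mathbb Z$ and $\alpha_i\in\overline k$ for all $i$, and let $L=k(\{\alpha_i\})$ be the field generated over $k$ by the coefficients. Then $\sigma(x)$ is algebraic over $k((x))$ if and only if $[L:k]<\infty$.
   Context: $\overline k((x))$ denotes the field of formal Laurent series in $x$ with coefficients in $\overline k$. *)

theory Defs
  imports "HOL-Computational_Algebra.Computational_Algebra"
begin

definition is_subfield :: "'a::field set \<Rightarrow> bool" where
  "is_subfield K \<longleftrightarrow> 0 \<in> K \<and> 1 \<in> K \<and>
     (\<forall>x\<in>K. \<forall>y\<in>K. x + y \<in> K \<and> x - y \<in> K \<and> x * y \<in> K) \<and>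
     (\<forall>x\<in>K. inverse x \<in> K)"

definition field_generated :: "'a::field set \<Rightarrow> 'a set \<Rightarrow> 'a set" where
  "field_generated K S = \<Inter> {L. is_subfield L \<and> K \<union> S \<subseteq> L}"

text \<open>Perfect field (characteristic of the ambient field = characteristic of the subfield):
  characteristic 0, or every element has a p-th root in the field.\<close>
definition perfect_subfield :: "'a::field set \<Rightarrow> bool" where
  "perfect_subfield F \<longleftrightarrow> is_subfield F \<and>
     (CHAR('a) = 0 \<or> (\<forall>x\<in>F. \<exists>y\<in>F. y ^ CHAR('a) = x))"

definition fin_gen_over_perfect :: "'a::field set \<Rightarrow> bool" where
  "fin_gen_over_perfect K \<longleftrightarrow>
     (\<exists>F S. perfect_subfield F \<and> F \<subseteq> K \<and> finite S \<and> K = field_generated F S)"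

definition algebraic_over :: "'a::field set \<Rightarrow> 'a \<Rightarrow> bool" where
  "algebraic_over K a \<longleftrightarrow> (\<exists>p. p \<noteq> 0 \<and> (\<forall>i. coeff p i \<in> K) \<and> poly p a = 0)"

text \<open>The ambient field (an algebraically closed type) is an algebraic closure of K.\<close>
definition is_algebraic_closure_of :: "'a::alg_closed_field set \<Rightarrow> bool" where
  "is_algebraic_closure_of K \<longleftrightarrow> is_subfield K \<and> (\<forall>a. algebraic_over K a)"

text \<open>k((x)) inside kbar((x)): Laurent series all of whose coefficients lie in K.\<close>
definition laurent_over :: "'a::field set \<Rightarrow> 'a fls set" where
  "laurent_over K = {f. \<forall>n. fls_nth f n \<in> K}"

text \<open>[L:K] < infinity: L is spanned as a K-vector space by a finite subset.\<close>
definition finite_degree_over :: "'a::field set \<Rightarrow> 'a set \<Rightarrow> bool" where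
  "finite_degree_over K L \<longleftrightarrow>
     (\<exists>B. finite B \<and> B \<subseteq> L \<and> (\<forall>y\<in>L. \<exists>c. (\<forall>b. c b \<in> K) \<and> y = (\<Sum>b\<in>B. c b * b)))"

end

theory Submission
  imports Defs
begin

unbundle fps_syntax

text \<open>
  The direction "L finite \<Longrightarrow> algebraic" is linear algebra: if B spans L over K, every power
  of \<sigma> is a K((x))-combination of the constants b \<in> B, so the powers of \<sigma> are dependent.

  For the converse we pass to a Frobenius power f = \<sigma>^q (q a power of the characteristic,
  q = 1 in characteristic 0) that is a simple root of a polynomial Q over K((x)).  A Hensel-type
  estimate shows that for large n the coefficient f_n is a rational expression over K in the
  coefficients f_i with i < n, so all coefficients of f lie in K(A) for a finite set A.  Since
  \<sigma>_i^q = f_{qi}, the coefficients of \<sigma> lie in the field of q-th roots of K(A), which is finite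
  over K because K is finitely generated over a perfect field and the ambient field is algebraic.
\<close>

section \<open>Spans over a subring\<close>

definition is_subring :: "'a::comm_ring_1 set \<Rightarrow> bool" where
  "is_subring K \<longleftrightarrow> 0 \<in> K \<and> 1 \<in> K \<and> (\<forall>x\<in>K. \<forall>y\<in>K. x + y \<in> K \<and> x - y \<in> K \<and> x * y \<in> K)"

definition span_over :: "'a::comm_ring_1 set \<Rightarrow> 'a set \<Rightarrow> 'a set" where
  "span_over K M = {v. \<exists>c. (\<forall>m\<in>M. c m \<in> K) \<and> v = (\<Sum>m\<in>M. c m * m)}"

lemma subringD:
  assumes "is_subring K"
  shows "0 \<in> K" "1 \<in> K" "x \<in> K \<Longrightarrow> y \<in> K \<Longrightarrow> x + y \<in> K"
    "x \<in> K \<Longrightarrow> y \<in> K \<Longrightarrow> x - y \<in> K" "x \<in> K \<Longrightarrow> y \<in> K \<Longrightarrow> x * y \<in> K"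
  using assms unfolding is_subring_def by auto

lemma subring_uminus: "is_subring K \<Longrightarrow> x \<in> K \<Longrightarrow> - x \<in> K"
  by (metis subringD(1) subringD(4) diff_0)

lemma subring_sum: "is_subring K \<Longrightarrow> (\<And>i. i \<in> A \<Longrightarrow> f i \<in> K) \<Longrightarrow> (\<Sum>i\<in>A. f i) \<in> K"
  by (induction A rule: infinite_finite_induct) (auto intro: subringD)

lemma subring_power: "is_subring K \<Longrightarrow> x \<in> K \<Longrightarrow> x ^ n \<in> K"
  by (induction n) (auto intro: subringD)

lemma subring_of_nat: "is_subring K \<Longrightarrow> of_nat n \<in> K"
  by (induction n) (auto intro: subringD)

lemma poly_in_subring:
  assumes "is_subring V" "\<forall>i. coeff q i \<in> V" "y \<in> V"
  shows "poly q y \<in> V"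
  using assms(2)
proof (induction q)
  case (pCons a q)
  have "\<forall>i. coeff q i \<in> V" "a \<in> V"
    using pCons.prems by (metis coeff_pCons_Suc, metis coeff_pCons_0)
  thus ?case using pCons.IH assms(1,3) by (auto intro: subringD)
qed (use assms in \<open>auto intro: subringD\<close>)

lemma span_over_zero: "is_subring K \<Longrightarrow> 0 \<in> span_over K M"
  unfolding span_over_def by (auto intro!: exI[of _ "\<lambda>_. 0"] intro: subringD)

lemma span_over_elem:
  assumes "is_subring K" "finite M" "m \<in> M"
  shows "m \<in> span_over K M"
proof -
  have "(\<Sum>x\<in>M. (if x = m then 1 else 0) * x) = (\<Sum>x\<in>M. if x = m then x else 0)"
    by (rule sum.cong) auto
  also have "\<dots> = m" using assms(2,3) by simp
  finally show ?thesis unfolding span_over_def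
    using assms(1) by (auto intro!: exI[of _ "\<lambda>x. if x = m then 1 else 0"] intro: subringD)
qed

lemma span_over_add: "is_subring K \<Longrightarrow> x \<in> span_over K M \<Longrightarrow> y \<in> span_over K M \<Longrightarrow> x + y \<in> span_over K M"
  unfolding span_over_def
proof clarify
  fix c d assume "is_subring K" "\<forall>m\<in>M. c m \<in> K" "\<forall>m\<in>M. d m \<in> K"
  thus "\<exists>e. (\<forall>m\<in>M. e m \<in> K) \<and> (\<Sum>m\<in>M. c m * m) + (\<Sum>m\<in>M. d m * m) = (\<Sum>m\<in>M. e m * m)"
    by (intro exI[of _ "\<lambda>m. c m + d m"]) (auto intro: subringD simp: sum.distrib distrib_right)
qed

lemma span_over_scale: "is_subring K \<Longrightarrow> a \<in> K \<Longrightarrow> x \<in> span_over K M \<Longrightarrow> a * x \<in> span_over K M"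
  unfolding span_over_def
proof clarify
  fix c assume "is_subring K" "a \<in> K" "\<forall>m\<in>M. c m \<in> K"
  thus "\<exists>e. (\<forall>m\<in>M. e m \<in> K) \<and> a * (\<Sum>m\<in>M. c m * m) = (\<Sum>m\<in>M. e m * m)"
    by (intro exI[of _ "\<lambda>m. a * c m"]) (auto intro: subringD simp: sum_distrib_left mult.assoc)
qed

lemma span_over_diff: "is_subring K \<Longrightarrow> x \<in> span_over K M \<Longrightarrow> y \<in> span_over K M \<Longrightarrow> x - y \<in> span_over K M"
  using span_over_add[of K x M "(-1) * y"] span_over_scale[of K "-1" y M] subring_uminus[of K 1] subringD(2)[of K]
  by simp

lemma span_over_sum: "is_subring K \<Longrightarrow> (\<And>i. i \<in> A \<Longrightarrow> f i \<in> span_over K M) \<Longrightarrow> (\<Sum>i\<in>A. f i) \<in> span_over K M"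
  by (induction A rule: infinite_finite_induct) (auto intro: span_over_add span_over_zero)

lemma span_over_trans:
  assumes "is_subring K" "finite Y" "X \<subseteq> span_over K Y"
  shows "span_over K X \<subseteq> span_over K Y"
proof
  fix v assume "v \<in> span_over K X"
  then obtain c where c: "\<forall>m\<in>X. c m \<in> K" "v = (\<Sum>m\<in>X. c m * m)" unfolding span_over_def by auto
  show "v \<in> span_over K Y" unfolding c(2)
    using assms c(1) by (intro span_over_sum) (auto intro: span_over_scale)
qed

definition products :: "'a::times set \<Rightarrow> 'a set \<Rightarrow> 'a set" where
  "products M N = (\<lambda>(m,n). m * n) ` (M \<times> N)"

lemma finite_products: "finite M \<Longrightarrow> finite N \<Longrightarrow> finite (products M N)"
  unfolding products_def by auto

lemma span_over_mult:
  assumes "is_subring K" "finite M" "finite N" "x \<in> span_over K M" "y \<in> span_over K N"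
  shows "x * y \<in> span_over K (products M N)"
proof -
  obtain c where c: "\<forall>m\<in>M. c m \<in> K" "x = (\<Sum>m\<in>M. c m * m)"
    using assms(4) unfolding span_over_def by auto
  obtain d where d: "\<forall>m\<in>N. d m \<in> K" "y = (\<Sum>m\<in>N. d m * m)"
    using assms(5) unfolding span_over_def by auto
  have "x * y = (\<Sum>m\<in>M. \<Sum>n\<in>N. (c m * d n) * (m * n))"
    unfolding c(2) d(2) sum_product by (simp add: algebra_simps)
  also have "\<dots> \<in> span_over K (products M N)"
    using assms c(1) d(1)
    by (intro span_over_sum span_over_scale span_over_elem finite_products) (auto intro: subringD simp: products_def)
  finally show ?thesis .
qed

text \<open>Eliminating the element j from a relation among the vectors a j * v i - a i * v j
  gives a relation among the v i in which v i keeps the coefficient d i * a j.\<close>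
lemma relation_after_elimination:
  fixes v :: "'i \<Rightarrow> 'a::comm_ring_1"
  assumes "finite I" "j \<in> I" "(\<Sum>i\<in>I - {j}. d i * (a j * v i - a i * v j)) = 0"
  shows "(\<Sum>i\<in>I. (if i = j then - (\<Sum>k\<in>I - {j}. d k * a k) else d i * a j) * v i) = 0"
proof -
  let ?c = "\<lambda>i. if i = j then - (\<Sum>k\<in>I - {j}. d k * a k) else d i * a j"
  have "(\<Sum>i\<in>I. ?c i * v i) = ?c j * v j + (\<Sum>i\<in>I - {j}. ?c i * v i)"
    using assms(1,2) by (simp add: sum.remove)
  also have "\<dots> = (\<Sum>i\<in>I - {j}. d i * (a j * v i - a i * v j))"
    by (simp add: sum_distrib_left sum_distrib_right sum_subtractf algebra_simps flip: sum.distrib)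
  finally show ?thesis using assms(3) by simp
qed

lemma span_over_insert_decompose:
  assumes "finite B" "b \<notin> B" "v \<in> span_over K (insert b B)"
  shows "\<exists>a w. a \<in> K \<and> w \<in> span_over K B \<and> v = a * b + w"
proof -
  obtain c where c: "\<forall>m\<in>insert b B. c m \<in> K" "v = (\<Sum>m\<in>insert b B. c m * m)"
    using assms(3) unfolding span_over_def by blast
  have "(\<Sum>m\<in>B. c m * m) \<in> span_over K B" using c(1) unfolding span_over_def by auto
  moreover have "v = c b * b + (\<Sum>m\<in>B. c m * m)" using c(2) assms(1,2) by simp
  ultimately show ?thesis using c(1) by blast
qed

text \<open>Steinitz exchange in its basic form: more than card B elements of the span of B
  satisfy a nontrivial linear relation.  The proof eliminates one spanning vector at a time.\<close>
lemma span_over_dependence: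
  fixes v :: "'i \<Rightarrow> 'a::idom"
  assumes K: "is_subring K" and "finite B"
  shows "finite I \<Longrightarrow> card I > card B \<Longrightarrow> (\<forall>i\<in>I. v i \<in> span_over K B) \<Longrightarrow>
         \<exists>c. (\<forall>i\<in>I. c i \<in> K) \<and> (\<exists>i\<in>I. c i \<noteq> 0) \<and> (\<Sum>i\<in>I. c i * v i) = 0"
  using assms(2)
proof (induction B arbitrary: I v rule: finite_induct)
  case empty
  then obtain i where "i \<in> I" by fastforce
  have "v k = 0" if "k \<in> I" for k using empty(3) that unfolding span_over_def by auto
  thus ?case using K \<open>i \<in> I\<close> by (intro exI[of _ "\<lambda>_. 1"]) (auto intro: subringD)
next
  case (insert b B)
  have "\<forall>i\<in>I. \<exists>a w. a \<in> K \<and> w \<in> span_over K B \<and> v i = a * b + w"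
    using span_over_insert_decompose[OF insert.hyps(1,2)] insert.prems(3) by blast
  then obtain a w where aK: "\<And>i. i \<in> I \<Longrightarrow> a i \<in> K"
    and wB: "\<And>i. i \<in> I \<Longrightarrow> w i \<in> span_over K B"
    and vaw: "\<And>i. i \<in> I \<Longrightarrow> v i = a i * b + w i"
    by metis
  show ?case
  proof (cases "\<forall>i\<in>I. a i = 0")
    case True
    then show ?thesis using insert vaw wB by auto
  next
    case False
    then obtain j where j: "j \<in> I" "a j \<noteq> 0" by blast
    \<comment> \<open>The vectors a j * v i - a i * v j (i \<noteq> j) no longer involve b.\<close>
    define u where "u i = a j * v i - a i * v j" for i
    have "u i = a j * w i - a i * w j" if "i \<in> I" for i
      unfolding u_def using vaw[OF that] vaw[OF j(1)] by (simp add: algebra_simps)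
    hence uB: "\<forall>i\<in>I - {j}. u i \<in> span_over K B"
      using K aK wB j(1) by (auto intro!: span_over_diff span_over_scale)
    have "card (I - {j}) > card B" "finite (I - {j})"
      using insert j by auto
    then obtain d where d: "\<forall>i\<in>I - {j}. d i \<in> K" "\<exists>i\<in>I - {j}. d i \<noteq> 0"
      "(\<Sum>i\<in>I - {j}. d i * u i) = 0"
      using insert.IH uB by blast
    define c where "c i = (if i = j then - (\<Sum>k\<in>I - {j}. d k * a k) else d i * a j)" for i
    have "(\<Sum>i\<in>I. c i * v i) = 0"
      unfolding c_def using relation_after_elimination[OF insert.prems(1) j(1)] d(3)
      by (simp add: u_def)
    moreover have "\<forall>i\<in>I. c i \<in> K"
      using K d(1) aK j(1) by (auto simp: c_def intro!: subringD subring_uminus subring_sum)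
    moreover have "\<exists>i\<in>I. c i \<noteq> 0"
      using d(2) j(2) by (auto simp: c_def)
    ultimately show ?thesis by blast
  qed
qed


section \<open>Subfields and finite-dimensional subspaces\<close>

lemma subfield_subring: "is_subfield K \<Longrightarrow> is_subring K"
  unfolding is_subfield_def is_subring_def by auto

lemma subfield_inverse: "is_subfield K \<Longrightarrow> x \<in> K \<Longrightarrow> inverse x \<in> K"
  unfolding is_subfield_def by auto

lemma subfield_divide: "is_subfield K \<Longrightarrow> x \<in> K \<Longrightarrow> y \<in> K \<Longrightarrow> x / y \<in> K"
  unfolding divide_inverse using subfield_inverse subfield_subring subringD(5) by blast

lemma subfield_field_generated: "is_subfield (field_generated K S)"
  unfolding is_subfield_def field_generated_def by auto

lemma field_generated_sup: "K \<union> S \<subseteq> field_generated K S"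
  unfolding field_generated_def by auto

lemma field_generated_least: "is_subfield L \<Longrightarrow> K \<union> S \<subseteq> L \<Longrightarrow> field_generated K S \<subseteq> L"
  unfolding field_generated_def by auto

lemma field_generated_mono:
  "K \<subseteq> K' \<Longrightarrow> S \<subseteq> S' \<Longrightarrow> field_generated K S \<subseteq> field_generated K' S'"
  by (rule field_generated_least[OF subfield_field_generated]) (use field_generated_sup[of K' S'] in auto)

definition lin_indep_over :: "'a::comm_ring_1 set \<Rightarrow> 'a set \<Rightarrow> bool" where
  "lin_indep_over K A \<longleftrightarrow>
     (\<forall>c. (\<forall>a\<in>A. c a \<in> K) \<longrightarrow> (\<Sum>a\<in>A. c a * a) = 0 \<longrightarrow> (\<forall>a\<in>A. c a = 0))"

lemma lin_indep_card_le:
  fixes A :: "'a::idom set"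
  assumes "is_subring K" "finite M" "finite A" "A \<subseteq> span_over K M" "lin_indep_over K A"
  shows "card A \<le> card M"
proof (rule ccontr)
  assume "\<not> card A \<le> card M"
  then obtain c where "\<forall>i\<in>A. c i \<in> K" "\<exists>i\<in>A. c i \<noteq> 0" "(\<Sum>i\<in>A. c i * i) = 0"
    using span_over_dependence[OF assms(1,2) assms(3), of "\<lambda>i. i"] assms(4) by auto
  thus False using assms(5) unfolding lin_indep_over_def by blast
qed

lemma lin_dependent_insert_combination:
  fixes K :: "'a::field set"
  assumes K: "is_subfield K" and A: "finite A" "lin_indep_over K A" "y \<notin> A"
    and dep: "\<not> lin_indep_over K (insert y A)"
  shows "\<exists>c. (\<forall>b. c b \<in> K) \<and> y = (\<Sum>b\<in>A. c b * b)"
proof -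
  have R: "is_subring K" using K by (rule subfield_subring)
  obtain c where c: "\<forall>a\<in>insert y A. c a \<in> K" "(\<Sum>a\<in>insert y A. c a * a) = 0"
    "\<exists>a\<in>insert y A. c a \<noteq> 0" using dep unfolding lin_indep_over_def by blast
  have sum: "c y * y + (\<Sum>a\<in>A. c a * a) = 0" using c(2) A by simp
  have cy: "c y \<noteq> 0"
  proof
    assume "c y = 0"
    hence "\<forall>a\<in>A. c a = 0" using sum A(2) c(1) unfolding lin_indep_over_def by auto
    thus False using c(3) \<open>c y = 0\<close> by auto
  qed
  have "y = - (\<Sum>a\<in>A. c a * a) / c y"
    using sum cy by (simp add: field_simps add_eq_0_iff)
  also have "\<dots> = (\<Sum>b\<in>A. (if b \<in> A then - c b / c y else 0) * b)"
    by (simp add: sum_divide_distrib sum_negf[symmetric])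
  finally show ?thesis
    using c(1) K R by (intro exI[of _ "\<lambda>b. if b \<in> A then - c b / c y else 0"])
      (auto intro!: subfield_divide subring_uminus intro: subringD)
qed

text \<open>A subset of a finitely spanned K-space has finite degree over K: a maximal independent
  subset (which exists by the bound on the size of independent sets) is a basis.\<close>
lemma finite_degree_if_finitely_spanned:
  fixes L :: "'a::field set"
  assumes K: "is_subfield K" and M: "finite M" and LM: "L \<subseteq> span_over K M"
  shows "finite_degree_over K L"
proof -
  have R: "is_subring K" using K by (rule subfield_subring)
  define S where "S = {card A | A. finite A \<and> A \<subseteq> L \<and> lin_indep_over K A}"
  have Sb: "S \<subseteq> {..card M}" unfolding S_def using lin_indep_card_le[OF R M] LM by fastforce
  have "0 \<in> S" unfolding S_def by (rule CollectI, rule exI[of _ "{}"]) (auto simp: lin_indep_over_def)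
  hence "Max S \<in> S" using Sb finite_subset by (intro Max_in) auto
  then obtain A where A: "finite A" "A \<subseteq> L" "lin_indep_over K A" "card A = Max S"
    unfolding S_def by auto
  have max: "card A' \<le> card A" if "finite A'" "A' \<subseteq> L" "lin_indep_over K A'" for A'
    unfolding A(4) using that Sb finite_subset by (intro Max_ge) (auto simp: S_def)
  have "\<exists>c. (\<forall>b. c b \<in> K) \<and> y = (\<Sum>b\<in>A. c b * b)" if "y \<in> L" for y
  proof (cases "y \<in> A")
    case True
    have "(\<Sum>b\<in>A. (if b = y then 1 else 0) * b) = (\<Sum>b\<in>A. if b = y then b else 0)"
      by (rule sum.cong) auto
    also have "\<dots> = y" using True A(1) by simp
    finally show ?thesis using R by (intro exI[of _ "\<lambda>b. if b = y then 1 else 0"]) (auto intro: subringD)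
  next
    case False
    have "\<not> lin_indep_over K (insert y A)"
      using max[of "insert y A"] A(1,2) that False by auto
    thus ?thesis by (rule lin_dependent_insert_combination[OF K A(1,3) False])
  qed
  thus ?thesis unfolding finite_degree_over_def using A(1,2) by blast
qed


section \<open>Algebraic elements and finitely spanned algebras\<close>

text \<open>If all powers of y lie in a finitely spanned K-module, then y is algebraic over K:
  the first card M + 1 powers are linearly dependent.\<close>
lemma algebraic_if_powers_in_finite_span:
  fixes y :: "'a::field"
  assumes K: "is_subring K" and M: "finite M" and pw: "\<And>i. y ^ i \<in> span_over K M"
  shows "algebraic_over K y"
proof -
  obtain c where c: "\<forall>i\<in>{0..card M}. c i \<in> K" "\<exists>i\<in>{0..card M}. c i \<noteq> 0"
    "(\<Sum>i\<in>{0..card M}. c i * y ^ i) = 0"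
    using span_over_dependence[OF K M, of "{0..card M}" "\<lambda>i. y ^ i"] pw by auto
  define p where "p = (\<Sum>i\<in>{0..card M}. monom (c i) i)"
  have cp: "coeff p n = (if n \<in> {0..card M} then c n else 0)" for n
    unfolding p_def by (simp add: coeff_sum coeff_monom)
  have "p \<noteq> 0" using c(2) cp by (metis coeff_0)
  moreover have "\<forall>i. coeff p i \<in> K" using cp c(1) K by (auto intro: subringD)
  moreover have "poly p y = 0" using c(3) by (simp add: p_def poly_sum poly_monom)
  ultimately show ?thesis unfolding algebraic_over_def by blast
qed

text \<open>A nonzero element of a subring V containing K that is algebraic over K has its inverse
  in V: divide the relation by the lowest nonvanishing coefficient.\<close>
lemma inverse_in_subring_if_algebraic:
  fixes y :: "'a::field"
  assumes V: "is_subring V" and KV: "K \<subseteq> V" and K: "is_subfield K" and "y \<noteq> 0" "y \<in> V"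
  shows "p \<noteq> 0 \<Longrightarrow> (\<forall>i. coeff p i \<in> K) \<Longrightarrow> poly p y = 0 \<Longrightarrow> inverse y \<in> V"
proof (induction p)
  case (pCons a q)
  have qK: "\<forall>i. coeff q i \<in> K" and aK: "a \<in> K"
    using pCons.prems(2) by (metis coeff_pCons_Suc, metis coeff_pCons_0)
  have eq: "a + y * poly q y = 0" using pCons.prems(3) by simp
  show ?case
  proof (cases "a = 0")
    case True
    then show ?thesis using pCons eq qK \<open>y \<noteq> 0\<close> by auto
  next
    case False
    have "inverse y = (- inverse a) * poly q y"
      using eq False \<open>y \<noteq> 0\<close> by (simp add: field_simps add_eq_0_iff)
    also have "\<dots> \<in> V"
      using qK KV aK subfield_inverse[OF K aK] V \<open>y \<in> V\<close>
      by (intro subringD(5)[OF V] subring_uminus[OF V] poly_in_subring[OF V]) (auto intro: subringD)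
    finally show ?thesis .
  qed
qed simp

lemma algebraic_powers_in_span:
  fixes a :: "'a::field"
  assumes K: "is_subfield K" and p: "p \<noteq> 0" "\<forall>i. coeff p i \<in> K" "poly p a = 0"
  shows "a ^ k \<in> span_over K ((\<lambda>j. a ^ j) ` {..<degree p})"
proof (induction k rule: less_induct)
  case (less k)
  define n where "n = degree p"
  have R: "is_subring K" using K by (rule subfield_subring)
  show ?case
  proof (cases "k < n")
    case True
    thus ?thesis using R by (intro span_over_elem) (auto simp: n_def)
  next
    case False
    have lc: "lead_coeff p \<noteq> 0" using p by simp
    have "0 = (\<Sum>j<n. coeff p j * a ^ j) + lead_coeff p * a ^ n"
      using p(3) by (simp add: poly_altdef n_def lessThan_Suc_atMost[symmetric])
    hence "a ^ n = - (\<Sum>j<n. coeff p j * a ^ j) / lead_coeff p"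
      using lc by (simp add: eq_divide_eq add_eq_0_iff2 mult.commute)
    hence an: "a ^ n = (\<Sum>j<n. (- coeff p j / lead_coeff p) * a ^ j)"
      by (simp add: sum_divide_distrib sum_negf[symmetric])
    have "a ^ k = a ^ (k - n) * a ^ n" using False by (simp flip: power_add)
    also have "\<dots> = (\<Sum>j<n. (- coeff p j / lead_coeff p) * a ^ (j + (k - n)))"
      unfolding an by (simp add: sum_distrib_left power_add algebra_simps)
    also have "\<dots> \<in> span_over K ((\<lambda>j. a ^ j) ` {..<n})"
    proof (intro span_over_sum[OF R] span_over_scale[OF R])
      fix j assume "j \<in> {..<n}"
      thus "- coeff p j / lead_coeff p \<in> K"
        using p(2) K by (intro subfield_divide subring_uminus R) auto
      from \<open>j \<in> _\<close> False have "j + (k - n) < k" by auto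
      thus "a ^ (j + (k - n)) \<in> span_over K ((\<lambda>j. a ^ j) ` {..<n})"
        using less.IH unfolding n_def by blast
    qed
    finally show ?thesis unfolding n_def .
  qed
qed

definition spans_algebra :: "'a::comm_ring_1 set \<Rightarrow> 'a set \<Rightarrow> bool" where
  "spans_algebra K M \<longleftrightarrow>
     1 \<in> span_over K M \<and> (\<forall>x\<in>span_over K M. \<forall>y\<in>span_over K M. x * y \<in> span_over K M)"

lemma span_over_contains_subring:
  assumes "is_subring K" "spans_algebra K M" "k \<in> K"
  shows "k \<in> span_over K M"
  using span_over_scale[OF assms(1,3), of 1 M] assms(2) unfolding spans_algebra_def by simp

lemma algebraic_spans_algebra:
  fixes a :: "'a::field"
  assumes K: "is_subfield K" and alg: "algebraic_over K a"
  shows "\<exists>P. finite P \<and> spans_algebra K P \<and> a \<in> span_over K P"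
proof -
  have R: "is_subring K" using K by (rule subfield_subring)
  from alg obtain p where p: "p \<noteq> 0" "\<forall>i. coeff p i \<in> K" "poly p a = 0"
    unfolding algebraic_over_def by auto
  define P where "P = (\<lambda>j. a ^ j) ` {..<degree p}"
  have fP: "finite P" unfolding P_def by auto
  have pw: "a ^ k \<in> span_over K P" for k unfolding P_def by (rule algebraic_powers_in_span[OF K p])
  have "x * y \<in> span_over K P" if "x \<in> span_over K P" "y \<in> span_over K P" for x y
  proof -
    have "products P P \<subseteq> span_over K P"
      unfolding products_def using pw unfolding P_def by (auto simp flip: power_add)
    thus ?thesis using span_over_mult[OF R fP fP that] span_over_trans[OF R fP] by blast
  qed
  moreover have "1 \<in> span_over K P" "a \<in> span_over K P" using pw[of 0] pw[of 1] by auto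
  ultimately show ?thesis using fP unfolding spans_algebra_def by blast
qed

lemma spans_algebra_products:
  assumes R: "is_subring K" and M: "finite M" "spans_algebra K M"
    and P: "finite P" "spans_algebra K P"
  shows "spans_algebra K (products M P)" "span_over K M \<subseteq> span_over K (products M P)"
    "span_over K P \<subseteq> span_over K (products M P)"
proof -
  have fMP: "finite (products M P)" using M(1) P(1) by (rule finite_products)
  have 1: "1 \<in> span_over K M" "1 \<in> span_over K P"
    using M(2) P(2) unfolding spans_algebra_def by auto
  have "products (products M P) (products M P) \<subseteq> span_over K (products M P)"
  proof
    fix z assume "z \<in> products (products M P) (products M P)"
    then obtain m1 m2 q1 q2 where z0: "z = (m1 * q1) * (m2 * q2)"
      and z: "m1 \<in> M" "m2 \<in> M" "q1 \<in> P" "q2 \<in> P"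
      unfolding products_def by auto
    have zz: "z = (m1 * m2) * (q1 * q2)" using z0 by (simp add: algebra_simps)
    have "m1 * m2 \<in> span_over K M" "q1 * q2 \<in> span_over K P"
      using M P z span_over_elem[OF R] unfolding spans_algebra_def by auto
    thus "z \<in> span_over K (products M P)" using span_over_mult[OF R M(1) P(1)] zz by auto
  qed
  hence "x * y \<in> span_over K (products M P)"
    if "x \<in> span_over K (products M P)" "y \<in> span_over K (products M P)" for x y
    using span_over_mult[OF R fMP fMP that] span_over_trans[OF R fMP] by blast
  moreover show "span_over K M \<subseteq> span_over K (products M P)"
    using span_over_mult[OF R M(1) P(1) _ 1(2)] by fastforce
  moreover show "span_over K P \<subseteq> span_over K (products M P)"
    using span_over_mult[OF R M(1) P(1) 1(1)] by fastforce
  ultimately show "spans_algebra K (products M P)"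
    using 1 unfolding spans_algebra_def by blast
qed

lemma algebraic_elements_span_algebra:
  fixes T :: "'a::field set"
  assumes K: "is_subfield K" and "finite T" and alg: "\<forall>t\<in>T. algebraic_over K t"
  shows "\<exists>M. finite M \<and> spans_algebra K M \<and> T \<subseteq> span_over K M"
  using assms(2) alg
proof (induction T rule: finite_induct)
  case empty
  have "span_over K {1} = K" unfolding span_over_def by (auto intro!: exI[of _ "\<lambda>_. x" for x])
  thus ?case using subfield_subring[OF K] unfolding spans_algebra_def
    by (intro exI[of _ "{1}"]) (auto intro: subringD)
next
  case (insert a T)
  have R: "is_subring K" using K by (rule subfield_subring)
  from insert obtain M where M: "finite M" "spans_algebra K M" "T \<subseteq> span_over K M" by auto
  obtain P where P: "finite P" "spans_algebra K P" "a \<in> span_over K P"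
    using algebraic_spans_algebra[OF K] insert.prems by blast
  show ?case using spans_algebra_products[OF R M(1,2) P(1,2)] M(3) P(3) M(1) P(1)
    by (intro exI[of _ "products M P"]) (auto intro: finite_products)
qed

text \<open>A finitely spanned K-algebra is a field, since each of its elements is algebraic over K.\<close>
lemma spans_algebra_subfield:
  fixes K :: "'a::field set"
  assumes K: "is_subfield K" and M: "finite M" "spans_algebra K M"
  shows "is_subfield (span_over K M)"
proof -
  have R: "is_subring K" using K by (rule subfield_subring)
  define V where "V = span_over K M"
  have RV: "is_subring V" unfolding is_subring_def V_def
    using M(2) span_over_zero[OF R] span_over_add[OF R] span_over_diff[OF R]
    unfolding spans_algebra_def by auto
  have KV: "K \<subseteq> V" unfolding V_def using span_over_contains_subring[OF R M(2)] by blast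
  have "inverse y \<in> V" if "y \<in> V" for y
  proof (cases "y = 0")
    case True thus ?thesis using RV by (auto intro: subringD)
  next
    case False
    have "algebraic_over K y"
      using algebraic_if_powers_in_finite_span[OF R M(1)] subring_power[OF RV that]
      unfolding V_def by blast
    thus ?thesis using inverse_in_subring_if_algebraic[OF RV KV K False that]
      unfolding algebraic_over_def by blast
  qed
  thus ?thesis using RV unfolding is_subfield_def is_subring_def V_def by auto
qed

lemma field_generated_finite_span:
  fixes T :: "'a::field set"
  assumes K: "is_subfield K" and "finite T" and alg: "\<forall>t\<in>T. algebraic_over K t"
  shows "\<exists>M. finite M \<and> field_generated K T \<subseteq> span_over K M"
proof -
  obtain M where M: "finite M" "spans_algebra K M" "T \<subseteq> span_over K M"
    using algebraic_elements_span_algebra[OF assms] by blast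
  have "K \<subseteq> span_over K M" using span_over_contains_subring[OF subfield_subring[OF K] M(2)] by blast
  hence "field_generated K T \<subseteq> span_over K M"
    using M(3) by (intro field_generated_least[OF spans_algebra_subfield[OF K M(1,2)]]) auto
  thus ?thesis using M(1) by blast
qed


section \<open>Laurent series with coefficients in a subfield; the easy direction\<close>

lemma laurent_over_subring: assumes "is_subring K" shows "is_subring (laurent_over K)"
  unfolding is_subring_def laurent_over_def using assms by (auto intro: subringD subring_sum simp: fls_times_nth(2))

lemma laurent_over_mono: "K \<subseteq> L \<Longrightarrow> laurent_over K \<subseteq> laurent_over L"
  unfolding laurent_over_def by auto

lemma laurent_over_of_nat: "is_subring K \<Longrightarrow> of_nat k \<in> laurent_over K"
  unfolding laurent_over_def by (auto simp: fls_of_nat_nth intro: subring_of_nat subringD)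

text \<open>If B spans L over K, then the constants fls_const b span the Laurent series over L
  as a module over the Laurent series over K: expand every coefficient in the basis B.\<close>
lemma laurent_over_finite_span:
  fixes s :: "'a::field fls"
  assumes K: "is_subring K" and B: "finite B"
    and span: "\<forall>y\<in>L. \<exists>c. (\<forall>b. c b \<in> K) \<and> y = (\<Sum>b\<in>B. c b * b)"
    and s: "s \<in> laurent_over L"
  shows "s \<in> span_over (laurent_over K) (fls_const ` B)"
proof -
  have "\<forall>n. \<exists>c. (\<forall>b. c b \<in> K) \<and> s $$ n = (\<Sum>b\<in>B. c b * b)"
    using s span unfolding laurent_over_def by blast
  then obtain cf where "\<forall>n. (\<forall>b. cf n b \<in> K) \<and> s $$ n = (\<Sum>b\<in>B. cf n b * b)"
    by (rule choice[THEN exE])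
  hence cf: "\<And>n b. cf n b \<in> K" "\<And>n. s $$ n = (\<Sum>b\<in>B. cf n b * b)" by blast+
  \<comment> \<open>Below the subdegree of s the coefficients are replaced by 0, so that they form series.\<close>
  define C where "C b = Abs_fls (\<lambda>n. if n < fls_subdegree s then 0 else cf n b)" for b
  have Cn: "C b $$ n = (if n < fls_subdegree s then 0 else cf n b)" for b n
    unfolding C_def by (rule nth_Abs_fls_lower_bound[of "fls_subdegree s"]) simp
  have CK: "C b \<in> laurent_over K" for b
    unfolding laurent_over_def using Cn cf(1) subringD(1)[OF K] by auto
  have "s = (\<Sum>b\<in>B. C b * fls_const b)"
  proof (rule fls_eqI)
    fix n show "s $$ n = (\<Sum>b\<in>B. C b * fls_const b) $$ n"
      unfolding fls_nth_sum fls_mult_const_nth Cn using cf(2)[of n]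
      by (cases "n < fls_subdegree s") auto
  qed
  also have "\<dots> \<in> span_over (laurent_over K) (fls_const ` B)"
    using laurent_over_subring[OF K] B CK
    by (intro span_over_sum span_over_scale span_over_elem) auto
  finally show ?thesis .
qed

text \<open>If the coefficients of \<sigma> generate a finite extension L of K, then all powers of \<sigma> lie in
  the finitely generated module spanned by a basis of L, so \<sigma> is algebraic over K((x)).\<close>
lemma finite_degree_imp_algebraic:
  fixes K :: "'a::field set" and \<sigma> :: "'a fls"
  assumes K: "is_subfield K"
    and fd: "finite_degree_over K (field_generated K (range (\<lambda>i. fls_nth \<sigma> i)))"
  shows "algebraic_over (laurent_over K) \<sigma>"
proof -
  define L where "L = field_generated K (range (\<lambda>i. fls_nth \<sigma> i))"
  obtain B where B: "finite B" "\<forall>y\<in>L. \<exists>c. (\<forall>b. c b \<in> K) \<and> y = (\<Sum>b\<in>B. c b * b)"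
    using fd unfolding finite_degree_over_def L_def by blast
  have R: "is_subring K" using K by (rule subfield_subring)
  have RL: "is_subring (laurent_over L)" unfolding L_def
    by (intro laurent_over_subring subfield_subring subfield_field_generated)
  have "range (\<lambda>i. fls_nth \<sigma> i) \<subseteq> L"
    unfolding L_def using field_generated_sup by (rule Un_subset_iff[THEN iffD1, THEN conjunct2])
  hence "\<sigma> \<in> laurent_over L" unfolding laurent_over_def by auto
  hence "\<sigma> ^ i \<in> span_over (laurent_over K) (fls_const ` B)" for i
    by (intro laurent_over_finite_span[OF R B(1,2)] subring_power[OF RL])
  thus ?thesis
    using algebraic_if_powers_in_finite_span[OF laurent_over_subring[OF R]] B(1) by blast
qed


section \<open>Valuation estimates for Laurent series\<close>

definition val_ge :: "int \<Rightarrow> 'a::zero fls \<Rightarrow> bool" where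
  "val_ge c s \<longleftrightarrow> (\<forall>i<c. s $$ i = 0)"

lemma val_geD: "val_ge c s \<Longrightarrow> i < c \<Longrightarrow> s $$ i = 0"
  unfolding val_ge_def by auto

lemma val_ge_mono: "c' \<le> c \<Longrightarrow> val_ge c s \<Longrightarrow> val_ge c' s"
  unfolding val_ge_def by auto

lemma val_ge_zero [simp]: "val_ge c 0"
  unfolding val_ge_def by auto

lemma val_ge_add: "val_ge c s \<Longrightarrow> val_ge c t \<Longrightarrow> val_ge c (s + t)"
  unfolding val_ge_def by auto

lemma val_ge_subdegree: "val_ge (fls_subdegree s) s"
  unfolding val_ge_def by auto

lemma val_ge_mult:
  fixes s t :: "'a::comm_ring_1 fls"
  assumes "val_ge a s" "val_ge b t"
  shows "val_ge (a + b) (s * t)"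
  unfolding val_ge_def
proof (intro allI impI)
  fix n assume n: "n < a + b"
  have "(s * t) $$ n = (\<Sum>i=fls_subdegree s..n - fls_subdegree t. s $$ i * t $$ (n - i))"
    by (rule fls_times_nth(2))
  also have "\<dots> = 0"
  proof (rule sum.neutral, rule ballI)
    fix i
    show "s $$ i * t $$ (n - i) = 0"
    proof (cases "i < a")
      case True thus ?thesis using val_geD[OF assms(1)] by simp
    next
      case False hence "n - i < b" using n by simp
      thus ?thesis using val_geD[OF assms(2)] by simp
    qed
  qed
  finally show "(s * t) $$ n = 0" .
qed

lemma val_ge_mult_nth:
  fixes s t :: "'a::comm_ring_1 fls"
  assumes "val_ge a s" "val_ge b t"
  shows "(s * t) $$ (a + b) = s $$ a * t $$ b"
proof -
  define A where "A = {fls_subdegree s..a + b - fls_subdegree t}"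
  have "(s * t) $$ (a + b) = (\<Sum>i\<in>A. s $$ i * t $$ (a + b - i))"
    unfolding A_def by (rule fls_times_nth(2))
  also have "\<dots> = (\<Sum>i\<in>A. if i = a then s $$ a * t $$ b else 0)"
  proof (rule sum.cong[OF refl])
    fix i assume "i \<in> A"
    show "s $$ i * t $$ (a + b - i) = (if i = a then s $$ a * t $$ b else 0)"
    proof (cases "i < a")
      case True thus ?thesis using val_geD[OF assms(1)] by simp
    next
      case False
      show ?thesis
      proof (cases "i = a")
        case False
        hence "a + b - i < b" using \<open>\<not> i < a\<close> by simp
        thus ?thesis using val_geD[OF assms(2)] False by simp
      qed simp
    qed
  qed
  also have "\<dots> = (if a \<in> A then s $$ a * t $$ b else 0)"
    unfolding A_def by (simp add: sum.delta)
  also have "\<dots> = s $$ a * t $$ b"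
  proof (cases "a \<in> A")
    case False
    hence "a < fls_subdegree s \<or> b < fls_subdegree t" unfolding A_def by auto
    thus ?thesis using False by auto
  qed simp
  finally show ?thesis .
qed

lemma val_ge_of_nat_mult: "val_ge c s \<Longrightarrow> val_ge c (of_nat k * (s::'a::comm_ring_1 fls))"
  unfolding val_ge_def by simp

lemma val_ge_uminus: "val_ge c (- s) \<Longrightarrow> val_ge c (s::'a::ab_group_add fls)"
  unfolding val_ge_def by auto

lemma val_ge_power:
  fixes s :: "'a::comm_ring_1 fls"
  assumes "val_ge c s"
  shows "val_ge (int n * c) (s ^ n)"
proof (induction n)
  case 0
  show ?case unfolding val_ge_def by (simp add: fls_one_nth)
next
  case (Suc n)
  then show ?case using val_ge_mult[OF assms(1) Suc.IH] by (simp add: algebra_simps)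
qed

lemma poly_val_ge:
  fixes Q :: "'a::comm_ring_1 fls poly"
  assumes "\<forall>i. val_ge c1 (coeff Q i)" "val_ge d0 y" "d0 \<le> 0"
  shows "val_ge (c1 + int (degree Q) * d0) (poly Q y)"
  using assms(1)
proof (induction Q)
  case (pCons a P)
  have cP: "\<forall>i. val_ge c1 (coeff P i)" using pCons.prems by (metis coeff_pCons_Suc)
  have ca: "val_ge c1 a" using pCons.prems by (metis coeff_pCons_0)
  show ?case
  proof (cases "P = 0")
    case True thus ?thesis using ca by simp
  next
    case False
    have deg: "degree (pCons a P) = Suc (degree P)" using False by simp
    have "val_ge (d0 + (c1 + int (degree P) * d0)) (y * poly P y)"
      by (rule val_ge_mult[OF assms(2) pCons.IH[OF cP]])
    moreover have "val_ge (d0 + (c1 + int (degree P) * d0)) a"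
    proof (rule val_ge_mono[OF _ ca])
      have "(1 + int (degree P)) * d0 \<le> 0" using assms(3) by (simp add: mult_nonneg_nonpos)
      thus "d0 + (c1 + int (degree P) * d0) \<le> c1" by (simp add: algebra_simps)
    qed
    ultimately show ?thesis using deg by (simp add: val_ge_add algebra_simps)
  qed
qed simp

lemma poly_increment_val_ge:
  fixes Q :: "'a::comm_ring_1 fls poly"
  assumes "\<forall>i. val_ge c1 (coeff Q i)" "val_ge d0 y" "val_ge d0 h" "val_ge n h" "d0 \<le> 0"
  shows "val_ge (n + c1 + int (degree Q) * d0) (poly Q (y + h) - poly Q y)"
  using assms(1)
proof (induction Q)
  case (pCons a P)
  have cP: "\<forall>i. val_ge c1 (coeff P i)" using pCons.prems by (metis coeff_pCons_Suc)
  show ?case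
  proof (cases "P = 0")
    case True thus ?thesis by simp
  next
    case False
    have deg: "degree (pCons a P) = Suc (degree P)" using False by simp
    have eq: "poly (pCons a P) (y + h) - poly (pCons a P) y = y * (poly P (y + h) - poly P y) + h * poly P (y + h)"
      by (simp add: algebra_simps)
    have "val_ge (d0 + (n + c1 + int (degree P) * d0)) (y * (poly P (y + h) - poly P y))"
      by (rule val_ge_mult[OF assms(2) pCons.IH[OF cP]])
    moreover have "val_ge (n + (c1 + int (degree P) * d0)) (h * poly P (y + h))"
      by (rule val_ge_mult[OF assms(4) poly_val_ge[OF cP val_ge_add[OF assms(2,3)] assms(5)]])
    hence "val_ge (d0 + (n + c1 + int (degree P) * d0)) (h * poly P (y + h))"
      by (rule val_ge_mono[rotated]) (use assms(5) in simp)
    ultimately have "val_ge (d0 + (n + c1 + int (degree P) * d0)) (y * (poly P (y + h) - poly P y) + h * poly P (y + h))"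
      by (rule val_ge_add)
    thus ?thesis unfolding eq deg by (rule val_ge_mono[rotated]) (simp add: algebra_simps)
  qed
qed simp

lemma poly_taylor_val_ge:
  fixes Q :: "'a::field fls poly"
  assumes "\<forall>i. val_ge c1 (coeff Q i)" "val_ge d0 y" "val_ge d0 h" "val_ge n h" "d0 \<le> 0"
  shows "val_ge (2 * n + c1 + int (degree Q) * d0)
           (poly Q (y + h) - poly Q y - h * poly (pderiv Q) y)"
  using assms(1)
proof (induction Q)
  case (pCons a P)
  have cP: "\<forall>i. val_ge c1 (coeff P i)" using pCons.prems by (metis coeff_pCons_Suc)
  show ?case
  proof (cases "P = 0")
    case True thus ?thesis by (simp add: pderiv_pCons)
  next
    case False
    have deg: "degree (pCons a P) = Suc (degree P)" using False by simp
    have eq: "poly (pCons a P) (y + h) - poly (pCons a P) y - h * poly (pderiv (pCons a P)) y =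
      y * (poly P (y + h) - poly P y - h * poly (pderiv P) y) + h * (poly P (y + h) - poly P y)"
      by (simp add: pderiv_pCons algebra_simps)
    have "val_ge (d0 + (2 * n + c1 + int (degree P) * d0)) (y * (poly P (y + h) - poly P y - h * poly (pderiv P) y))"
      by (rule val_ge_mult[OF assms(2) pCons.IH[OF cP]])
    moreover have "val_ge (n + (n + c1 + int (degree P) * d0)) (h * (poly P (y + h) - poly P y))"
      by (rule val_ge_mult[OF assms(4) poly_increment_val_ge[OF cP assms(2-5)]])
    hence "val_ge (d0 + (2 * n + c1 + int (degree P) * d0)) (h * (poly P (y + h) - poly P y))"
      by (rule val_ge_mono[rotated]) (use assms(5) in simp)
    ultimately have "val_ge (d0 + (2 * n + c1 + int (degree P) * d0)) (y * (poly P (y + h) - poly P y - h * poly (pderiv P) y) + h * (poly P (y + h) - poly P y))"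
      by (rule val_ge_add)
    thus ?thesis unfolding eq deg by (rule val_ge_mono[rotated]) (simp add: algebra_simps)
  qed
qed simp

lemma poly_coeffs_val_bound:
  fixes Q :: "'a::zero fls poly"
  shows "\<exists>c1. \<forall>i. val_ge c1 (coeff Q i)"
proof -
  define c1 where "c1 = - (\<Sum>i\<le>degree Q. \<bar>fls_subdegree (coeff Q i)\<bar>)"
  have "val_ge c1 (coeff Q i)" for i
  proof (cases "i \<le> degree Q")
    case True
    have "\<bar>fls_subdegree (coeff Q i)\<bar> \<le> (\<Sum>i\<le>degree Q. \<bar>fls_subdegree (coeff Q i)\<bar>)"
      using True by (intro member_le_sum) auto
    hence "c1 \<le> fls_subdegree (coeff Q i)" unfolding c1_def by linarith
    thus ?thesis by (rule val_ge_mono) (rule val_ge_subdegree)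
  next
    case False thus ?thesis by (simp add: coeff_eq_0)
  qed
  thus ?thesis by blast
qed


section \<open>Coefficients of a simple root (Hensel-type argument)\<close>

definition fls_trunc :: "int \<Rightarrow> 'a::zero fls \<Rightarrow> 'a fls" where
  "fls_trunc n f = Abs_fls (\<lambda>i. if i < n then f $$ i else 0)"

lemma fls_trunc_nth: "fls_trunc n f $$ i = (if i < n then f $$ i else 0)"
  unfolding fls_trunc_def by (rule nth_Abs_fls_lower_bound[of "fls_subdegree f"]) auto

lemma val_ge_fls_trunc: "val_ge (min 0 (fls_subdegree f)) (fls_trunc n f)"
  unfolding val_ge_def fls_trunc_nth by auto

lemma val_ge_fls_trunc_remainder:
  fixes f :: "'a::ab_group_add fls"
  shows "val_ge n (f - fls_trunc n f)" "val_ge (min 0 (fls_subdegree f)) (f - fls_trunc n f)"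
  unfolding val_ge_def by (auto simp: fls_trunc_nth)

lemma degree_pderiv_le: "degree (pderiv Q) \<le> degree Q - 1"
  by (rule degree_le) (auto simp: coeff_pderiv coeff_eq_0)

text \<open>The key identity: let f be a root of Q with Q'(f) \<noteq> 0 of valuation v, and let g be
  the truncation of f below x^n.  If n is large enough, then the coefficient f_n is determined
  linearly by Q(g) and Q'(g):  Q(g)_{n+v} + f_n Q'(g)_v = 0  and  Q'(g)_v = Q'(f)_v \<noteq> 0.
  This follows from the Taylor expansion of Q at g with increment h = f - g.\<close>
lemma simple_root_coefficient_identity:
  fixes f :: "'a::field fls" and Q :: "'a fls poly"
  assumes root: "poly Q f = 0" and nz: "poly (pderiv Q) f \<noteq> 0"
    and c1: "\<forall>i. val_ge c1 (coeff Q i)"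
    and v: "v = fls_subdegree (poly (pderiv Q) f)"
    and n: "v < n + c1 + int (degree Q) * min 0 (fls_subdegree f)"
  shows "poly Q (fls_trunc n f) $$ (n + v) + f $$ n * poly (pderiv Q) (fls_trunc n f) $$ v = 0"
    and "poly (pderiv Q) (fls_trunc n f) $$ v = poly (pderiv Q) f $$ v"
    and "poly (pderiv Q) f $$ v \<noteq> 0"
proof -
  define g where "g = fls_trunc n f"
  define D where "D = pderiv Q"
  define d0 where "d0 = min 0 (fls_subdegree f)"
  define h where "h = f - g"
  have fgh: "f = g + h" unfolding h_def by simp
  have d0g: "val_ge d0 g" unfolding g_def d0_def by (rule val_ge_fls_trunc)
  have d0h: "val_ge d0 h" and nh: "val_ge n h"
    unfolding h_def g_def d0_def by (rule val_ge_fls_trunc_remainder)+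
  have d0le: "d0 \<le> 0" unfolding d0_def by simp
  have c1D: "\<forall>i. val_ge c1 (coeff D i)"
    unfolding D_def coeff_pderiv using c1 val_ge_of_nat_mult by blast
  have "int (degree D) * d0 \<ge> int (degree Q) * d0"
    using degree_pderiv_le[of Q] d0le unfolding D_def by (intro mult_right_mono_neg) auto
  hence nD: "v < n + c1 + int (degree D) * d0" using n unfolding d0_def by linarith
  have T: "val_ge (2 * n + c1 + int (degree Q) * d0) (poly Q (g + h) - poly Q g - h * poly D g)"
    unfolding D_def by (rule poly_taylor_val_ge[OF c1 d0g d0h nh d0le])
  have S: "val_ge (n + c1 + int (degree D) * d0) (poly D (g + h) - poly D g)"
    by (rule poly_increment_val_ge[OF c1D d0g d0h nh d0le])
  define F where "F = poly D f"
  have vF: "val_ge v F" unfolding F_def v D_def by (rule val_ge_subdegree)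
  have "poly Q (g + h) = 0" using root by (simp only: fgh[symmetric])
  hence "poly Q (g + h) - poly Q g - h * poly D g = - (poly Q g + h * poly D g)" by simp
  hence "val_ge (2 * n + c1 + int (degree Q) * d0) (poly Q g + h * poly D g)"
    using T by (metis val_ge_uminus)
  hence 1: "(poly Q g + h * poly D g) $$ (n + v) = 0"
    using n unfolding d0_def by (intro val_geD) auto
  have "val_ge (n + (n + c1 + int (degree D) * d0)) (h * (F - poly D g))"
    using val_ge_mult[OF nh S[folded fgh]] unfolding F_def .
  hence 2: "(h * (F - poly D g)) $$ (n + v) = 0"
    using nD by (intro val_geD) auto
  have 3: "(h * F) $$ (n + v) = f $$ n * F $$ v"
    using val_ge_mult_nth[OF nh vF] unfolding h_def g_def by (simp add: fls_trunc_nth)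
  have 4: "poly (pderiv Q) g $$ v = poly (pderiv Q) f $$ v"
    using val_geD[OF S[folded fgh], of v] nD unfolding D_def by auto
  thus "poly (pderiv Q) (fls_trunc n f) $$ v = poly (pderiv Q) f $$ v" unfolding g_def .
  have "h * poly D g = h * F - h * (F - poly D g)" by (simp add: algebra_simps)
  hence "poly Q g $$ (n + v) + f $$ n * poly (pderiv Q) g $$ v = 0"
    using 1 2 3 4 unfolding F_def D_def by simp
  thus "poly Q (fls_trunc n f) $$ (n + v) + f $$ n * poly (pderiv Q) (fls_trunc n f) $$ v = 0"
    unfolding g_def .
  show "poly (pderiv Q) f $$ v \<noteq> 0" using nz unfolding v by simp
qed

lemma simple_root_coefficient_step:
  fixes f :: "'a::field fls" and Q :: "'a fls poly"
  assumes E: "is_subfield E" and QE: "\<forall>i. coeff Q i \<in> laurent_over E"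
    and root: "poly Q f = 0" and nz: "poly (pderiv Q) f \<noteq> 0"
    and c1: "\<forall>i. val_ge c1 (coeff Q i)"
    and v: "v = fls_subdegree (poly (pderiv Q) f)"
    and n: "v < n + c1 + int (degree Q) * min 0 (fls_subdegree f)"
    and below: "\<forall>i<n. f $$ i \<in> E"
  shows "f $$ n \<in> E"
proof -
  have RE: "is_subring E" using E by (rule subfield_subring)
  have RLE: "is_subring (laurent_over E)" by (rule laurent_over_subring[OF RE])
  define g where "g = fls_trunc n f"
  have gE: "g \<in> laurent_over E"
    unfolding laurent_over_def g_def using below subringD(1)[OF RE] by (auto simp: fls_trunc_nth)
  have DE: "\<forall>i. coeff (pderiv Q) i \<in> laurent_over E"
    unfolding coeff_pderiv using QE laurent_over_of_nat[OF RE] subringD(5)[OF RLE] by blast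
  have A: "poly Q g $$ (n + v) \<in> E" "poly (pderiv Q) g $$ v \<in> E"
    using poly_in_subring[OF RLE QE gE] poly_in_subring[OF RLE DE gE]
    unfolding laurent_over_def by auto
  note id = simple_root_coefficient_identity[OF root nz c1 v n, folded g_def]
  have "poly (pderiv Q) g $$ v \<noteq> 0" using id(2,3) by simp
  moreover have "f $$ n * poly (pderiv Q) g $$ v = - (poly Q g $$ (n + v))"
    using id(1) by (simp add: eq_neg_iff_add_eq_0 add.commute)
  ultimately have "f $$ n = - (poly Q g $$ (n + v)) / poly (pderiv Q) g $$ v"
    by (metis nonzero_mult_div_cancel_right)
  also have "\<dots> \<in> E" using A E RE by (intro subfield_divide subring_uminus) auto
  finally show ?thesis .
qed

lemma simple_root_coefficients_finitely_generated:
  fixes f :: "'a::field fls" and Q :: "'a fls poly"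
  assumes K: "is_subfield K" and QK: "\<forall>i. coeff Q i \<in> laurent_over K"
    and root: "poly Q f = 0" and nz: "poly (pderiv Q) f \<noteq> 0"
  shows "\<exists>N. \<forall>n. f $$ n \<in> field_generated K (fls_nth f ` {fls_subdegree f..N})"
proof -
  obtain c1 where c1: "\<forall>i. val_ge c1 (coeff Q i)" using poly_coeffs_val_bound by blast
  define v where "v = fls_subdegree (poly (pderiv Q) f)"
  define N where "N = \<bar>v\<bar> + \<bar>c1 + int (degree Q) * min 0 (fls_subdegree f)\<bar>"
  define E where "E = field_generated K (fls_nth f ` {fls_subdegree f..N})"
  have E: "is_subfield E" unfolding E_def by (rule subfield_field_generated)
  have KE: "K \<subseteq> E" and gen: "fls_nth f ` {fls_subdegree f..N} \<subseteq> E"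
    unfolding E_def using field_generated_sup by blast+
  have QE: "\<forall>i. coeff Q i \<in> laurent_over E" using QK laurent_over_mono[OF KE] by blast
  have "f $$ n \<in> E" for n
  proof (induction n rule: measure_induct_rule[where f = "\<lambda>n. nat (n - fls_subdegree f)"])
    case (less n)
    consider "n < fls_subdegree f" | "fls_subdegree f \<le> n" "n \<le> N" | "N < n" by linarith
    then show ?case
    proof cases
      case 1
      then show ?thesis using E unfolding is_subfield_def by simp
    next
      case 2
      then show ?thesis using gen by auto
    next
      case 3
      have "f $$ i \<in> E" if "i < n" for i
      proof (cases "i < fls_subdegree f")
        case True
        then show ?thesis using E unfolding is_subfield_def by simp
      next
        case False
        then show ?thesis using less that by simp
      qed
      moreover have "v < n + c1 + int (degree Q) * min 0 (fls_subdegree f)"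
        using 3 unfolding N_def by linarith
      ultimately show ?thesis
        by (intro simple_root_coefficient_step[OF E QE root nz c1 v_def]) auto
    qed
  qed
  thus ?thesis unfolding E_def by (intro exI[of _ N] allI)
qed


section \<open>Reduction to a simple root by Frobenius powers\<close>

lemma degree_pos_if_root:
  fixes Q :: "'b::comm_ring_1 poly"
  assumes "Q \<noteq> 0" "poly Q y = 0"
  shows "degree Q \<ge> 1"
proof (rule ccontr)
  assume "\<not> degree Q \<ge> 1"
  hence Qc: "Q = [:coeff Q 0:]" by (simp add: degree_0_id)
  hence "coeff Q 0 \<noteq> 0" using assms(1) by auto
  moreover have "poly Q y = coeff Q 0" by (subst Qc) simp
  ultimately show False using assms(2) by simp
qed

lemma pderiv_zero_coeff:
  fixes Q :: "'b::idom poly"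
  assumes "pderiv Q = 0" "\<not> CHAR('b) dvd i"
  shows "coeff Q i = 0"
proof -
  obtain j where j: "i = Suc j" using assms(2) by (cases i) auto
  have "of_nat i * coeff Q i = 0"
    using arg_cong[OF assms(1), of "\<lambda>r. coeff r j"] j by (simp add: coeff_pderiv)
  moreover have "(of_nat i :: 'b) \<noteq> 0" using assms(2) by (simp add: of_nat_eq_0_iff_char_dvd)
  ultimately show ?thesis by simp
qed

lemma poly_in_powers:
  fixes Q :: "'b::comm_ring_1 poly"
  assumes p: "p > 0" and d: "degree Q = p * d" and van: "\<And>i. \<not> p dvd i \<Longrightarrow> coeff Q i = 0"
  shows "poly (\<Sum>j\<le>d. monom (coeff Q (p * j)) j) (y ^ p) = poly Q y"
proof -
  have "poly (\<Sum>j\<le>d. monom (coeff Q (p * j)) j) (y ^ p) = (\<Sum>j\<le>d. coeff Q (p * j) * y ^ (p * j))"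
    by (simp add: poly_sum poly_monom power_mult)
  also have "\<dots> = (\<Sum>i\<in>(\<lambda>j. p * j) ` {..d}. coeff Q i * y ^ i)"
    using p by (subst sum.reindex) (auto simp: inj_on_def)
  also have "\<dots> = (\<Sum>i\<le>degree Q. coeff Q i * y ^ i)"
  proof (rule sum.mono_neutral_left)
    show "\<forall>i\<in>{..degree Q} - (\<lambda>j. p * j) ` {..d}. coeff Q i * y ^ i = 0"
    proof
      fix i assume i: "i \<in> {..degree Q} - (\<lambda>j. p * j) ` {..d}"
      show "coeff Q i * y ^ i = 0"
      proof (cases "p dvd i")
        case True
        then obtain k where "i = p * k" by (elim dvdE)
        with i d p show ?thesis by auto
      qed (simp add: van)
    qed
  qed (use d in auto)
  also have "\<dots> = poly Q y" by (simp add: poly_altdef)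
  finally show ?thesis .
qed

lemma pderiv_zero_descends:
  fixes Q :: "'b::idom poly"
  assumes pd: "pderiv Q = 0" and deg: "degree Q \<ge> 1"
  shows "\<exists>R. CHAR('b) > 0 \<and> R \<noteq> 0 \<and> degree R < degree Q \<and> (\<forall>j. coeff R j = coeff Q (CHAR('b) * j))
             \<and> (\<forall>y. poly R (y ^ CHAR('b)) = poly Q y)"
proof -
  define p where "p = CHAR('b)"
  have Qnz: "Q \<noteq> 0" using deg by auto
  have van: "coeff Q i = 0" if "\<not> p dvd i" for i
    using pderiv_zero_coeff[OF pd] that unfolding p_def by simp
  have pdeg: "p dvd degree Q" using van[of "degree Q"] Qnz by auto
  have "p \<noteq> 0" using pdeg deg by auto
  hence p1: "p > 1" unfolding p_def using prime_CHAR_semidom prime_gt_1_nat by blast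
  then obtain d where d: "degree Q = p * d" using pdeg by (auto elim: dvdE)
  define R where "R = (\<Sum>j\<le>d. monom (coeff Q (p * j)) j)"
  have cR: "coeff R j = coeff Q (p * j)" for j
    unfolding R_def using d p1 by (auto simp: coeff_sum coeff_monom coeff_eq_0)
  have "coeff R d \<noteq> 0" using cR[of d] d[symmetric] Qnz by simp
  hence "R \<noteq> 0" by auto
  moreover have "degree R < degree Q"
  proof -
    have "degree R \<le> d" unfolding R_def by (intro degree_sum_le) (auto intro: order.trans[OF degree_monom_le])
    moreover have "d < p * d" using p1 d deg by simp
    ultimately show ?thesis using d by linarith
  qed
  moreover have "poly R (y ^ p) = poly Q y" for y
    unfolding R_def using p1 d van by (intro poly_in_powers) auto
  ultimately show ?thesis using p1 cR unfolding p_def by (intro exI[of _ R]) auto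
qed

text \<open>Take a polynomial of minimal degree among
  all those annihilating some Frobenius power of \<sigma>: its derivative cannot vanish at the root by
  minimality, and it cannot vanish identically, since then it descends to a polynomial of smaller
  degree in x^p annihilating the next Frobenius power.\<close>
lemma algebraic_frobenius_power_simple_root:
  fixes \<sigma> :: "'a::field fls"
  assumes K: "is_subfield K" and alg: "algebraic_over (laurent_over K) \<sigma>"
  shows "\<exists>e Q. CHAR('a) ^ e \<noteq> 0 \<and> (\<forall>i. coeff Q i \<in> laurent_over K) \<and>
           poly Q (\<sigma> ^ (CHAR('a) ^ e)) = 0 \<and> poly (pderiv Q) (\<sigma> ^ (CHAR('a) ^ e)) \<noteq> 0"
proof -
  have R: "is_subring K" using K by (rule subfield_subring)
  have RL: "is_subring (laurent_over K)" by (rule laurent_over_subring[OF R])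
  define P where "P e Q \<longleftrightarrow> CHAR('a) ^ e \<noteq> 0 \<and> Q \<noteq> 0 \<and> (\<forall>i. coeff Q i \<in> laurent_over K) \<and>
           poly Q (\<sigma> ^ (CHAR('a) ^ e)) = 0" for e Q
  from alg obtain p0 where "p0 \<noteq> 0" "\<forall>i. coeff p0 i \<in> laurent_over K" "poly p0 \<sigma> = 0"
    unfolding algebraic_over_def by blast
  hence "P 0 p0" unfolding P_def by simp
  define m where "m = (LEAST d. \<exists>e Q. P e Q \<and> degree Q = d)"
  have "\<exists>e Q. P e Q \<and> degree Q = m"
    unfolding m_def by (rule LeastI_ex) (use \<open>P 0 p0\<close> in blast)
  then obtain e Q where Q: "P e Q" "degree Q = m" by blast
  have minimal: "degree Q' \<ge> m" if "P e' Q'" for e' Q'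
    unfolding m_def using that by (intro Least_le) blast
  define y where "y = \<sigma> ^ (CHAR('a) ^ e)"
  have Qy: "poly Q y = 0" "Q \<noteq> 0" "\<forall>i. coeff Q i \<in> laurent_over K" "CHAR('a) ^ e \<noteq> 0"
    using Q(1) unfolding P_def y_def by auto
  have deg1: "degree Q \<ge> 1" by (rule degree_pos_if_root[OF Qy(2,1)])
  have "poly (pderiv Q) y \<noteq> 0"
  proof (cases "pderiv Q = 0")
    case False
    show ?thesis
    proof
      assume "poly (pderiv Q) y = 0"
      moreover have "\<forall>i. coeff (pderiv Q) i \<in> laurent_over K"
        unfolding coeff_pderiv using Qy(3) laurent_over_of_nat[OF R] subringD(5)[OF RL] by blast
      ultimately have "P e (pderiv Q)" using False Qy(4) unfolding P_def y_def by blast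
      hence "degree (pderiv Q) \<ge> m" by (rule minimal)
      thus False using degree_pderiv_le[of Q] deg1 Q(2) by linarith
    qed
  next
    case True
    obtain R where Rp: "CHAR('a fls) > 0" "R \<noteq> 0" "degree R < degree Q"
      "\<forall>j. coeff R j = coeff Q (CHAR('a fls) * j)" "\<forall>y. poly R (y ^ CHAR('a fls)) = poly Q y"
      using pderiv_zero_descends[OF True deg1] by blast
    have "\<sigma> ^ (CHAR('a) ^ Suc e) = y ^ CHAR('a)"
      unfolding y_def by (simp add: power_mult[symmetric] mult.commute)
    hence "poly R (\<sigma> ^ (CHAR('a) ^ Suc e)) = 0" using Rp(5) Qy(1) by simp
    moreover have "\<forall>i. coeff R i \<in> laurent_over K" using Rp(4) Qy(3) by simp
    moreover have "CHAR('a) ^ Suc e \<noteq> 0" using Rp(1) by simp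
    ultimately have "P (Suc e) R" unfolding P_def using Rp(2) by blast
    hence "degree R \<ge> m" by (rule minimal)
    thus ?thesis using Rp(3) Q(2) by simp
  qed
  thus ?thesis using Qy unfolding y_def by blast
qed


section \<open>The Frobenius map\<close>

text \<open>Throughout, q = CHAR^e \<noteq> 0: a power of the characteristic p, or q = 1 when p = 0.
  Raising to the q-th power is then an injective ring endomorphism.\<close>
lemma frobenius_add:
  fixes x y :: "'a::idom"
  assumes q: "q = CHAR('a) ^ e" "q \<noteq> 0"
  shows "(x + y) ^ q = x ^ q + y ^ q"
proof (cases "CHAR('a) = 0")
  case True
  then have "q = 1" using q by (cases e) auto
  then show ?thesis by simp
next
  case False
  then have "prime CHAR('a)" by (simp add: prime_CHAR_semidom)
  then show ?thesis using q(1) by (rule freshmans_dream')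
qed

lemma frobenius_sum:
  fixes f :: "'b \<Rightarrow> 'a::idom"
  assumes "q = CHAR('a) ^ e" "q \<noteq> 0"
  shows "(\<Sum>i\<in>A. f i) ^ q = (\<Sum>i\<in>A. f i ^ q)"
  by (induction A rule: infinite_finite_induct) (use assms in \<open>auto simp: frobenius_add\<close>)

lemma frobenius_diff:
  fixes x y :: "'a::idom"
  assumes "q = CHAR('a) ^ e" "q \<noteq> 0"
  shows "(x - y) ^ q = x ^ q - y ^ q"
  using frobenius_add[OF assms, of "x - y" y] by (simp add: algebra_simps)

lemma frobenius_inj:
  fixes x y :: "'a::idom"
  assumes "q = CHAR('a) ^ e" "q \<noteq> 0" "x ^ q = y ^ q"
  shows "x = y"
  using frobenius_diff[OF assms(1,2), of x y] assms by simp

lemma frobenius_image_subfield: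
  fixes G :: "'a::field set"
  assumes q: "q = CHAR('a) ^ e" "q \<noteq> 0" and G: "is_subfield G"
  shows "is_subfield ((\<lambda>u. u ^ q) ` G)"
proof -
  have R: "is_subring G" using G by (rule subfield_subring)
  show ?thesis unfolding is_subfield_def
  proof (intro conjI ballI)
    show "0 \<in> (\<lambda>u. u ^ q) ` G" using q(2) subringD(1)[OF R] by (intro image_eqI[of _ _ 0]) auto
    show "1 \<in> (\<lambda>u. u ^ q) ` G" using subringD(2)[OF R] by (intro image_eqI[of _ _ 1]) auto
    fix x y assume "x \<in> (\<lambda>u. u ^ q) ` G" and "y \<in> (\<lambda>u. u ^ q) ` G"
    then obtain a b where ab: "a \<in> G" "b \<in> G" "x = a ^ q" "y = b ^ q" by auto
    show "x + y \<in> (\<lambda>u. u ^ q) ` G"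
      using ab frobenius_add[OF q, of a b] subringD(3)[OF R] by (intro image_eqI[of _ _ "a + b"]) auto
    show "x - y \<in> (\<lambda>u. u ^ q) ` G"
      using ab frobenius_diff[OF q, of a b] subringD(4)[OF R] by (intro image_eqI[of _ _ "a - b"]) auto
    show "x * y \<in> (\<lambda>u. u ^ q) ` G"
      using ab subringD(5)[OF R] by (intro image_eqI[of _ _ "a * b"]) (auto simp: power_mult_distrib)
  next
    fix x assume "x \<in> (\<lambda>u. u ^ q) ` G"
    then obtain a where a: "a \<in> G" "x = a ^ q" by auto
    show "inverse x \<in> (\<lambda>u. u ^ q) ` G"
      using a subfield_inverse[OF G a(1)] by (intro image_eqI[of _ _ "inverse a"]) (auto simp: power_inverse)
  qed
qed

lemma frobenius_preimage_subfield:
  fixes E :: "'a::field set"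
  assumes q: "q = CHAR('a) ^ e" "q \<noteq> 0" and E: "is_subfield E"
  shows "is_subfield {z. z ^ q \<in> E}"
  using q(2) subringD[OF subfield_subring[OF E]] subfield_inverse[OF E]
    frobenius_add[OF q] frobenius_diff[OF q]
  unfolding is_subfield_def by (auto simp: power_mult_distrib power_inverse zero_power)

lemma fls_monomial_nth: "(fls_const c * fls_X_intpow j) $$ n = (if n = j then (c::'a::field) else 0)"
  by simp

lemma fls_trunc_sum:
  fixes f :: "'a::field fls"
  shows "fls_trunc n f = (\<Sum>j\<in>{fls_subdegree f..<n}. fls_const (f $$ j) * fls_X_intpow j)"
proof (rule fls_eqI)
  fix i
  have "(\<Sum>j\<in>{fls_subdegree f..<n}. fls_const (f $$ j) * fls_X_intpow j) $$ i =
        (\<Sum>j\<in>{fls_subdegree f..<n}. if i = j then f $$ j else 0)"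
    unfolding fls_nth_sum fls_monomial_nth by (intro sum.cong) auto
  also have "\<dots> = fls_trunc n f $$ i" by (auto simp: fls_trunc_nth)
  finally show "fls_trunc n f $$ i =
      (\<Sum>j\<in>{fls_subdegree f..<n}. fls_const (f $$ j) * fls_X_intpow j) $$ i" by (rule sym)
qed

text \<open>Split s into its truncation t below x^(i+1) and the rest h; then s^q = t^q + h^q, the
  monomials of t are raised to the q-th power separately, and h^q has no terms below x^(q(i+1)).\<close>
lemma frobenius_fls_nth:
  fixes s :: "'a::field fls"
  assumes q: "q = CHAR('a) ^ e" "q \<noteq> 0"
  shows "(s ^ q) $$ (int q * i) = (s $$ i) ^ q"
proof -
  have qF: "q = CHAR('a fls) ^ e" using q(1) by simp
  define t where "t = fls_trunc (i + 1) s"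
  define h where "h = s - t"
  have "val_ge (int q * (i + 1)) (h ^ q)"
    unfolding h_def t_def by (intro val_ge_power val_ge_fls_trunc_remainder)
  hence hq: "(h ^ q) $$ (int q * i) = 0" using q(2) by (intro val_geD) auto
  have sq: "s ^ q = t ^ q + h ^ q"
    using frobenius_add[OF qF q(2), of t h] unfolding h_def by simp
  have tq: "t ^ q = (\<Sum>j\<in>{fls_subdegree s..<i + 1}. fls_const ((s $$ j) ^ q) * fls_X_intpow (int q * j))"
    unfolding t_def fls_trunc_sum frobenius_sum[OF qF q(2)]
    by (simp add: power_mult_distrib fls_const_power fls_X_intpow_power)
  have "(t ^ q) $$ (int q * i) = (\<Sum>j\<in>{fls_subdegree s..<i + 1}. if i = j then (s $$ j) ^ q else 0)"
    unfolding tq fls_nth_sum fls_monomial_nth using q(2) by (intro sum.cong) auto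
  hence "(t ^ q) $$ (int q * i) = (s $$ i) ^ q"
    using q(2) by (cases "fls_subdegree s \<le> i") auto
  thus ?thesis using sq hq by simp
qed


section \<open>Frobenius preimages over a finitely generated extension of a perfect field\<close>

lemma perfect_subfield_roots:
  fixes F :: "'a::field set"
  assumes F: "perfect_subfield F" and q: "q = CHAR('a) ^ e" "q \<noteq> 0"
  shows "\<forall>x\<in>F. \<exists>y\<in>F. y ^ q = x"
proof (cases "CHAR('a) = 0")
  case True
  then have "q = 1" using q by (cases e) auto
  then show ?thesis by simp
next
  case False
  have perf: "\<forall>x\<in>F. \<exists>y\<in>F. y ^ CHAR('a) = x" using F False unfolding perfect_subfield_def by auto
  have "\<forall>x\<in>F. \<exists>y\<in>F. y ^ (CHAR('a) ^ k) = x" for k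
  proof (induction k)
    case (Suc k)
    show ?case
    proof
      fix x assume "x \<in> F"
      then obtain y1 where y1: "y1 \<in> F" "y1 ^ CHAR('a) = x" using perf by blast
      then obtain y2 where y2: "y2 \<in> F" "y2 ^ (CHAR('a) ^ k) = y1" using Suc.IH by blast
      have "y2 ^ (CHAR('a) ^ Suc k) = (y2 ^ (CHAR('a) ^ k)) ^ CHAR('a)"
        by (simp add: power_mult[symmetric] mult.commute)
      thus "\<exists>y\<in>F. y ^ (CHAR('a) ^ Suc k) = x" using y1 y2 by auto
    qed
  qed simp
  then show ?thesis using q(1) by simp
qed

text \<open>If K = F(S) with F perfect, then K(A) = F(S \<union> A) is the image of the Frobenius map on
  F(T'), where T' consists of q-th roots of the finitely many generators S \<union> A.\<close>
lemma perfect_field_generated_frobenius_image: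
  fixes K :: "'a::alg_closed_field set"
  assumes F: "perfect_subfield F" and KFS: "K = field_generated F S" and S: "finite S"
    and q: "q = CHAR('a) ^ e" "q \<noteq> 0" and A: "finite A"
  shows "\<exists>T'. finite T' \<and> field_generated K A \<subseteq> (\<lambda>u. u ^ q) ` field_generated F T'"
proof -
  define T where "T = S \<union> A"
  define r where "r t = (SOME z. z ^ q = t)" for t :: 'a
  have r: "r t ^ q = t" for t
    unfolding r_def by (rule someI_ex) (rule nth_root_exists, use q(2) in simp)
  define G where "G = field_generated F (r ` T)"
  define W where "W = (\<lambda>u. u ^ q) ` G"
  have W: "is_subfield W" unfolding W_def G_def by (rule frobenius_image_subfield[OF q subfield_field_generated])
  have FG: "F \<subseteq> G" and rG: "r ` T \<subseteq> G" unfolding G_def using field_generated_sup by blast+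
  have FW: "F \<subseteq> W"
  proof
    fix x assume "x \<in> F"
    then obtain y where "y \<in> F" "y ^ q = x" using perfect_subfield_roots[OF F q] by blast
    thus "x \<in> W" unfolding W_def using FG by auto
  qed
  have TW: "T \<subseteq> W"
  proof
    fix t assume "t \<in> T"
    thus "t \<in> W" unfolding W_def using rG r[of t] by (intro image_eqI[of _ _ "r t"]) auto
  qed
  have "K \<subseteq> field_generated F T" unfolding KFS T_def by (rule field_generated_mono) auto
  hence "field_generated K A \<subseteq> field_generated F T"
    using field_generated_sup[of F T]
    by (intro field_generated_least[OF subfield_field_generated]) (auto simp: T_def)
  also have "field_generated F T \<subseteq> W" by (rule field_generated_least[OF W]) (use FW TW in auto)
  finally have "field_generated K A \<subseteq> (\<lambda>u. u ^ q) ` field_generated F (r ` T)"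
    unfolding W_def G_def .
  moreover have "finite (r ` T)" using S A unfolding T_def by simp
  ultimately show ?thesis by blast
qed

text \<open>Then for every finitely generated extension K(A), the elements whose q-th power lies
  in K(A) form a field that is finite-dimensional over K.  They lie in F(T') for a finite set
  T' of algebraic elements, and F(T') \<subseteq> K(T') is finitely spanned over K.\<close>
lemma frobenius_preimage_finite_span:
  fixes K :: "'a::alg_closed_field set"
  assumes K: "is_algebraic_closure_of K" and fg: "fin_gen_over_perfect K"
    and q: "q = CHAR('a) ^ e" "q \<noteq> 0" and A: "finite A"
  shows "\<exists>M. finite M \<and> {z. z ^ q \<in> field_generated K A} \<subseteq> span_over K M"
proof -
  have Ksub: "is_subfield K" and alg: "\<forall>a. algebraic_over K a"
    using K unfolding is_algebraic_closure_of_def by auto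
  obtain F S where F: "perfect_subfield F" "F \<subseteq> K" "finite S" "K = field_generated F S"
    using fg unfolding fin_gen_over_perfect_def by blast
  obtain T' where T': "finite T'" "field_generated K A \<subseteq> (\<lambda>u. u ^ q) ` field_generated F T'"
    using perfect_field_generated_frobenius_image[OF F(1,4,3) q A] by blast
  obtain M where M: "finite M" "field_generated K T' \<subseteq> span_over K M"
    using field_generated_finite_span[OF Ksub T'(1)] alg by blast
  have "z \<in> span_over K M" if zq: "z ^ q \<in> field_generated K A" for z
  proof -
    obtain u where u: "u \<in> field_generated F T'" "z ^ q = u ^ q" using zq T'(2) by blast
    hence "z = u" using frobenius_inj[OF q] by blast
    moreover have "field_generated F T' \<subseteq> field_generated K T'"
      using F(2) by (rule field_generated_mono) simp
    ultimately show ?thesis using u M(2) by auto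
  qed
  thus ?thesis using M(1) by blast
qed


lemma algebraic_imp_finite_degree:
  fixes K :: "'a::alg_closed_field set" and \<sigma> :: "'a fls"
  assumes K: "is_algebraic_closure_of K" and fg: "fin_gen_over_perfect K"
    and alg: "algebraic_over (laurent_over K) \<sigma>"
  shows "finite_degree_over K (field_generated K (range (\<lambda>i. fls_nth \<sigma> i)))"
proof -
  have Ksub: "is_subfield K" using K unfolding is_algebraic_closure_of_def by auto
  obtain e Q where Q: "CHAR('a) ^ e \<noteq> 0" "\<forall>i. coeff Q i \<in> laurent_over K"
    "poly Q (\<sigma> ^ (CHAR('a) ^ e)) = 0" "poly (pderiv Q) (\<sigma> ^ (CHAR('a) ^ e)) \<noteq> 0"
    using algebraic_frobenius_power_simple_root[OF Ksub alg] by blast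
  define q where "q = CHAR('a) ^ e"
  have q0: "q \<noteq> 0" using Q(1) unfolding q_def .
  define f where "f = \<sigma> ^ q"
  obtain N where N: "\<forall>n. f $$ n \<in> field_generated K (fls_nth f ` {fls_subdegree f..N})"
    using simple_root_coefficients_finitely_generated[OF Ksub Q(2)] Q(3,4)
    unfolding f_def q_def by blast
  define E where "E = field_generated K (fls_nth f ` {fls_subdegree f..N})"
  obtain M where M: "finite M" "{z. z ^ q \<in> E} \<subseteq> span_over K M"
    using frobenius_preimage_finite_span[OF K fg q_def q0] unfolding E_def by blast
  have Z: "is_subfield {z. z ^ q \<in> E}"
    unfolding E_def by (rule frobenius_preimage_subfield[OF q_def q0 subfield_field_generated])
  have "K \<subseteq> E" unfolding E_def using field_generated_sup by blast
  hence "K \<subseteq> {z. z ^ q \<in> E}" using subring_power[OF subfield_subring[OF Ksub]] by blast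
  moreover have "\<sigma> $$ i \<in> {z. z ^ q \<in> E}" for i
  proof -
    have "(\<sigma> $$ i) ^ q = f $$ (int q * i)"
      unfolding f_def by (rule frobenius_fls_nth[OF q_def q0, symmetric])
    thus ?thesis using N unfolding E_def by simp
  qed
  ultimately have "field_generated K (range (\<lambda>i. fls_nth \<sigma> i)) \<subseteq> {z. z ^ q \<in> E}"
    by (intro field_generated_least[OF Z]) auto
  thus ?thesis using finite_degree_if_finitely_spanned[OF Ksub M(1)] M(2) by blast
qed

theorem corollary2p6:
  fixes K :: "'a::alg_closed_field set" and \<sigma> :: "'a fls"
  assumes "is_algebraic_closure_of K"
    and "fin_gen_over_perfect K"
  shows "algebraic_over (laurent_over K) \<sigma> \<longleftrightarrow>
         finite_degree_over K (field_generated K (range (\<lambda>i. fls_nth \<sigma> i)))"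
proof
  assume "algebraic_over (laurent_over K) \<sigma>"
  then show "finite_degree_over K (field_generated K (range (\<lambda>i. fls_nth \<sigma> i)))"
    by (rule algebraic_imp_finite_degree[OF assms])
next
  have "is_subfield K" using assms(1) unfolding is_algebraic_closure_of_def by auto
  moreover assume "finite_degree_over K (field_generated K (range (\<lambda>i. fls_nth \<sigma> i)))"
  ultimately show "algebraic_over (laurent_over K) \<sigma>" by (rule finite_degree_imp_algebraic)
qed

end
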